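(* For every integer $n\ge2$, if $T$ is a uniformly random standard Young tableau of shape $(n,n,n)$, then $T_{1,2}\in\{2,3,4\}$ and $$\mathbb E\big[x^{T_{1,2}}\big]=\frac{2(n-1)}{3n-1}\,x^2+\frac{8(n-1)(n+1)}{3(3n-1)(3n-2)}\,x^3+\frac{(n+1)(n+2)}{3(3n-1)(3n-2)}\,x^4 .$$
   Context: A standard Young tableau of shape $(n,n,n)$ is a bijective filling $T$ of the cells $[a,b]$ ($1\le a\le 3$, $1\le b\le n$; row $a$, column $b$) by $\{1,\dots,3n\}$ that increases along each row and down each column. $T_{a,b}$ denotes the entry in cell $[a,b]$. *)

theory Defs
  imports "HOL-Probability.Probability"
begin

definition cells3 :: "nat \<Rightarrow> (nat \<times> nat) set" where
  "cells3 n = {1..3} \<times> {1..n}"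

text \<open>Standard Young tableaux of shape (n,n,n), as functions on cells,
  extended by 0 outside the shape (so that the set of tableaux is finite).\<close>
definition SYT3 :: "nat \<Rightarrow> (nat \<times> nat \<Rightarrow> nat) set" where
  "SYT3 n = {T. bij_betw T (cells3 n) {1..3*n}
              \<and> (\<forall>c. c \<notin> cells3 n \<longrightarrow> T c = 0)
              \<and> (\<forall>a b. (a, b) \<in> cells3 n \<longrightarrow> (a, Suc b) \<in> cells3 n \<longrightarrow> T (a, b) < T (a, Suc b))
              \<and> (\<forall>a b. (a, b) \<in> cells3 n \<longrightarrow> (Suc a, b) \<in> cells3 n \<longrightarrow> T (a, b) < T (Suc a, b))}"

end

theory Submission
  imports Defs
begin

text \<open>
  Deleting the entry 1 of a standard filling of a finite set of cells and lowering all other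
  entries by one identifies the fillings with 1 in a given minimal cell c with the standard
  fillings of the set without c. In a tableau of shape (n, n, n) the cell (1, 1) comes first, and
  (1, 2) comes right after (1, 1) and the first k further cells of column 1, for k = 0, 1 or 2;
  the cells filled later form the shape (n, n, n) with the first few cells of each row deleted.
  Rotated by 180 degrees this is the straight shape (n, n, n - 2), (n, n - 1, n - 2) or
  (n - 1, n - 1, n - 2), whose tableaux are counted by the hook length formula, proved here from
  the branching recurrence.
\<close>

definition succ_cell :: "nat \<times> nat \<Rightarrow> nat \<times> nat \<Rightarrow> bool" where
  "succ_cell d e \<longleftrightarrow> e = (fst d, Suc (snd d)) \<or> e = (Suc (fst d), snd d)"

definition syt_on :: "(nat \<times> nat) set \<Rightarrow> (nat \<times> nat \<Rightarrow> nat) set" where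
  "syt_on D = {T. bij_betw T D {1..card D} \<and> (\<forall>c. c \<notin> D \<longrightarrow> T c = 0)
                 \<and> (\<forall>d\<in>D. \<forall>e\<in>D. succ_cell d e \<longrightarrow> T d < T e)}"

definition min_cell :: "(nat \<times> nat) set \<Rightarrow> nat \<times> nat \<Rightarrow> bool" where
  "min_cell D c \<longleftrightarrow> c \<in> D \<and> (\<forall>d\<in>D. \<not> succ_cell d c)"

definition add_first :: "nat \<times> nat \<Rightarrow> (nat \<times> nat \<Rightarrow> nat) \<Rightarrow> nat \<times> nat \<Rightarrow> nat" where
  "add_first c T = (\<lambda>d. if d = c then 1 else if T d = 0 then 0 else Suc (T d))"

definition drop_first :: "nat \<times> nat \<Rightarrow> (nat \<times> nat \<Rightarrow> nat) \<Rightarrow> nat \<times> nat \<Rightarrow> nat" where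
  "drop_first c T = (\<lambda>d. if d = c then 0 else T d - 1)"

lemma finite_syt_on: "finite D \<Longrightarrow> finite (syt_on D)"
proof -
  assume "finite D"
  moreover have "syt_on D \<subseteq> {T. \<forall>d. (d \<in> D \<longrightarrow> T d \<in> {0..card D}) \<and> (d \<notin> D \<longrightarrow> T d = 0)}"
    by (auto simp: syt_on_def bij_betw_def)
  ultimately show ?thesis
    using finite_set_of_finite_funs[of D "{0..card D}" 0] by (auto intro: finite_subset)
qed

lemma syt_on_outside: "T \<in> syt_on D \<Longrightarrow> c \<notin> D \<Longrightarrow> T c = 0"
  unfolding syt_on_def by blast

lemma syt_on_range: "T \<in> syt_on D \<Longrightarrow> d \<in> D \<Longrightarrow> T d \<in> {1..card D}"
  by (auto simp: syt_on_def bij_betw_def)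

lemma syt_on_inj: "T \<in> syt_on D \<Longrightarrow> inj_on T D"
  by (simp add: syt_on_def bij_betw_def)

lemma syt_on_mono: "T \<in> syt_on D \<Longrightarrow> d \<in> D \<Longrightarrow> e \<in> D \<Longrightarrow> succ_cell d e \<Longrightarrow> T d < T e"
  by (simp add: syt_on_def)

lemma syt_on_empty: "syt_on {} = {\<lambda>_. 0}"
  by (auto simp: syt_on_def bij_betw_def)

lemma bij_betw_add_first:
  assumes "finite D" "c \<in> D" "bij_betw T (D - {c}) {1..card (D - {c})}"
  shows "bij_betw (add_first c T) D {1..card D}"
proof -
  define k where "k = card (D - {c})"
  have card_D: "card D = Suc k" using assms(1,2) by (metis k_def card_Suc_Diff1)
  have "bij_betw (Suc \<circ> T) (D - {c}) (Suc ` {1..k})"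
    using assms(3) by (auto simp: k_def intro: bij_betw_trans)
  moreover have "add_first c T d = (Suc \<circ> T) d" if "d \<in> D - {c}" for d
    using that bij_betw_apply[OF assms(3) that] by (simp add: add_first_def)
  ultimately have "bij_betw (add_first c T) (D - {c}) (Suc ` {1..k})"
    using bij_betw_cong by blast
  then have "bij_betw (add_first c T) (D - {c}) {2..Suc k}" by (simp add: numeral_2_eq_2)
  moreover have "bij_betw (add_first c T) {c} {1}" by (simp add: add_first_def)
  ultimately have "bij_betw (add_first c T) ((D - {c}) \<union> {c}) ({2..Suc k} \<union> {1})"
    by (rule bij_betw_combine) simp
  moreover have "(D - {c}) \<union> {c} = D" "{2..Suc k} \<union> {1} = {1..card D}"
    using assms(2) card_D by auto
  ultimately show ?thesis by simp
qed

lemma add_first_in_syt_on: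
  assumes "finite D" "min_cell D c" "T \<in> syt_on (D - {c})"
  shows "add_first c T \<in> syt_on D"
proof -
  have c: "c \<in> D" using assms(2) by (simp add: min_cell_def)
  have shift: "add_first c T d = Suc (T d)" if "d \<in> D - {c}" for d
    using syt_on_range[OF assms(3) that] that by (simp add: add_first_def)
  have "add_first c T d < add_first c T e" if "d \<in> D" "e \<in> D" "succ_cell d e" for d e
  proof -
    have e: "e \<in> D - {c}" using assms(2) that by (auto simp: min_cell_def)
    show ?thesis
    proof (cases "d = c")
      case True
      moreover have "add_first c T c = 1" by (simp add: add_first_def)
      ultimately show ?thesis using shift[OF e] syt_on_range[OF assms(3) e] by simp
    next
      case False
      then show ?thesis using shift[OF e] shift[of d] that syt_on_mono[OF assms(3), of d e] e by simp
    qed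
  qed
  moreover have "bij_betw (add_first c T) D {1..card D}"
    using bij_betw_add_first[OF assms(1) c] assms(3) by (simp add: syt_on_def)
  moreover have "add_first c T d = 0" if "d \<notin> D" for d
    using that c syt_on_outside[OF assms(3), of d] by (auto simp: add_first_def)
  ultimately show ?thesis by (simp add: syt_on_def)
qed

lemma syt_on_ge_2:
  assumes "T \<in> syt_on D" "T c = 1" "d \<in> D - {c}"
  shows "T d \<ge> 2"
proof -
  have "c \<in> D" using assms(1,2) syt_on_outside by fastforce
  then have "T d \<noteq> T c" using assms syt_on_inj inj_on_eq_iff by fastforce
  then show ?thesis using syt_on_range[OF assms(1)] assms by fastforce
qed

lemma drop_first_in_syt_on:
  assumes "finite D" "T \<in> syt_on D" "T c = 1"
  shows "drop_first c T \<in> syt_on (D - {c})"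
proof -
  have c: "c \<in> D" using assms(2,3) syt_on_outside by fastforce
  have ge2: "\<And>d. d \<in> D - {c} \<Longrightarrow> T d \<ge> 2" using syt_on_ge_2[OF assms(2,3)] .
  have shift: "drop_first c T d = T d - 1" if "d \<noteq> c" for d using that by (simp add: drop_first_def)
  have "bij_betw T (D - {c}) ({1..card D} - {1})"
    using assms c by (intro bij_betw_DiffI) (auto simp: syt_on_def Suc_le_eq card_gt_0_iff)
  moreover have "{1..card D} - {1} = Suc ` {1..card (D - {c})}"
    using assms(1) c by (auto simp: card_Suc_Diff1 image_Suc_atLeastAtMost)
  moreover have "T d = (Suc \<circ> drop_first c T) d" if "d \<in> D - {c}" for d
    using ge2[OF that] that shift by simp
  ultimately have "bij_betw (Suc \<circ> drop_first c T) (D - {c}) (Suc ` {1..card (D - {c})})"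
    by (metis (no_types, lifting) bij_betw_cong)
  then have "bij_betw (drop_first c T) (D - {c}) {1..card (D - {c})}"
    unfolding bij_betw_def image_comp[symmetric] inj_image_eq_iff[OF inj_Suc]
    using inj_on_imageI2 by blast
  moreover have "drop_first c T d < drop_first c T e"
    if "d \<in> D - {c}" "e \<in> D - {c}" "succ_cell d e" for d e
    using that ge2[OF that(1)] syt_on_mono[OF assms(2), of d e] shift[of d] shift[of e] by auto
  moreover have "drop_first c T d = 0" if "d \<notin> D - {c}" for d
    using that syt_on_outside[OF assms(2), of d] by (auto simp: drop_first_def)
  ultimately show ?thesis by (simp add: syt_on_def)
qed

lemma add_first_drop_first:
  assumes "T \<in> syt_on D" "T c = 1"
  shows "add_first c (drop_first c T) = T"
proof
  fix d
  show "add_first c (drop_first c T) d = T d"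
    using syt_on_ge_2[OF assms, of d] syt_on_outside[OF assms(1), of d] assms(2)
    by (cases "d \<in> D") (auto simp: add_first_def drop_first_def)
qed

lemma min_cell_if_label_one:
  assumes "T \<in> syt_on D" "c \<in> D" "T c = 1"
  shows "min_cell D c"
  using assms syt_on_mono[OF assms(1) _ assms(2)] syt_on_range[OF assms(1)]
  by (fastforce simp: min_cell_def)

lemma bij_betw_add_first_syt_on:
  assumes "finite D" "min_cell D c"
  shows "bij_betw (add_first c) (syt_on (D - {c})) {T \<in> syt_on D. T c = 1}"
proof (rule bij_betw_imageI)
  show "inj_on (add_first c) (syt_on (D - {c}))"
  proof (rule inj_onI)
    fix T T' assume T: "T \<in> syt_on (D - {c})" "T' \<in> syt_on (D - {c})"
      and eq: "add_first c T = add_first c T'"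
    show "T = T'"
    proof
      fix d
      show "T d = T' d"
        using fun_cong[OF eq, of d] syt_on_outside[OF T(1), of c] syt_on_outside[OF T(2), of c]
        by (auto simp: add_first_def split: if_splits)
    qed
  qed
  show "add_first c ` syt_on (D - {c}) = {T \<in> syt_on D. T c = 1}"
  proof (intro equalityI subsetI)
    fix T assume "T \<in> add_first c ` syt_on (D - {c})"
    then show "T \<in> {T \<in> syt_on D. T c = 1}"
      using add_first_in_syt_on[OF assms] by (auto simp: add_first_def)
  next
    fix T assume "T \<in> {T \<in> syt_on D. T c = 1}"
    then show "T \<in> add_first c ` syt_on (D - {c})"
      using drop_first_in_syt_on[OF assms(1)] add_first_drop_first
      by (metis (mono_tags) image_eqI mem_Collect_eq)
  qed
qed

lemma sum_syt_on_by_min_cell: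
  assumes "finite D" "D \<noteq> {}"
  shows "(\<Sum>T\<in>syt_on D. g T) = (\<Sum>c | min_cell D c. \<Sum>T\<in>syt_on (D - {c}). g (add_first c T))"
proof -
  have fin_min: "finite {c. min_cell D c}"
    using assms(1) by (rule finite_subset[rotated]) (auto simp: min_cell_def)
  have cover: "syt_on D = (\<Union>c\<in>{c. min_cell D c}. {T \<in> syt_on D. T c = 1})"
  proof (intro equalityI subsetI)
    fix T assume T: "T \<in> syt_on D"
    have "1 \<in> T ` D"
      using T assms by (auto simp: syt_on_def bij_betw_def Suc_le_eq card_gt_0_iff)
    then obtain c where "c \<in> D" "T c = 1" by auto
    then show "T \<in> (\<Union>c\<in>{c. min_cell D c}. {T \<in> syt_on D. T c = 1})"
      using T min_cell_if_label_one by blast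
  qed blast
  have disjoint: "{T \<in> syt_on D. T c = 1} \<inter> {T \<in> syt_on D. T c' = 1} = {}"
    if "min_cell D c" "min_cell D c'" "c \<noteq> c'" for c c'
  proof -
    have "\<not> (T c = 1 \<and> T c' = 1)" if "T \<in> syt_on D" for T
      using inj_onD[OF syt_on_inj[OF that], of c c'] \<open>min_cell D c\<close> \<open>min_cell D c'\<close> \<open>c \<noteq> c'\<close>
      by (auto simp: min_cell_def)
    then show ?thesis by blast
  qed
  have "sum g (\<Union>c\<in>{c. min_cell D c}. {T \<in> syt_on D. T c = 1})
      = (\<Sum>c | min_cell D c. sum g {T \<in> syt_on D. T c = 1})"
    by (rule sum.UNION_disjoint[OF fin_min]) (use disjoint finite_syt_on[OF assms(1)] in auto)
  then have "(\<Sum>T\<in>syt_on D. g T) = (\<Sum>c | min_cell D c. sum g {T \<in> syt_on D. T c = 1})"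
    by (simp only: cover[symmetric])
  also have "\<dots> = (\<Sum>c | min_cell D c. \<Sum>T\<in>syt_on (D - {c}). g (add_first c T))"
    by (rule sum.cong[OF refl], rule sum.reindex_bij_betw[symmetric],
        rule bij_betw_add_first_syt_on[OF assms(1)], simp)
  finally show ?thesis .
qed

lemma min_cell_iff:
  "min_cell D (a, b) \<longleftrightarrow> (a, b) \<in> D \<and> (\<forall>b'. b = Suc b' \<longrightarrow> (a, b') \<notin> D)
     \<and> (\<forall>a'. a = Suc a' \<longrightarrow> (a', b) \<notin> D)"
  by (auto simp: min_cell_def succ_cell_def)

lemma sum_syt_on_entry:
  fixes f :: "nat \<Rightarrow> 'a::comm_semiring_1"
  assumes "finite D" "z \<in> D"
  shows "(\<Sum>T\<in>syt_on D. f (T z)) = (\<Sum>c | min_cell D c.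
    if c = z then of_nat (card (syt_on (D - {c}))) * f 1 else \<Sum>T\<in>syt_on (D - {c}). f (Suc (T z)))"
proof -
  have "D \<noteq> {}" using assms(2) by auto
  then show ?thesis unfolding sum_syt_on_by_min_cell[OF assms(1) \<open>D \<noteq> {}\<close>]
  proof (intro sum.cong refl)
    fix c
    show "(\<Sum>T\<in>syt_on (D - {c}). f (add_first c T z)) = (if c = z
      then of_nat (card (syt_on (D - {c}))) * f 1 else \<Sum>T\<in>syt_on (D - {c}). f (Suc (T z)))"
    proof (cases "c = z")
      case False
      have "add_first c T z = Suc (T z)" if "T \<in> syt_on (D - {c})" for T
        using syt_on_range[OF that, of z] assms(2) False by (simp add: add_first_def)
      then show ?thesis using False by simp
    qed (simp add: add_first_def)
  qed
qed

text \<open>The hook length formula for the number of standard Young tableaux of shape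
  \<open>(a, b, c)\<close>, \<open>a \<ge> b \<ge> c\<close>.\<close>

definition num_syt3 :: "nat \<Rightarrow> nat \<Rightarrow> nat \<Rightarrow> real" where
  "num_syt3 a b c = fact (a + b + c) * ((real a - real b + 1) * (real a - real c + 2) * (real b - real c + 1))
     / (fact (a + 2) * fact (b + 1) * fact c)"

lemma num_syt3_pos: "c \<le> b \<Longrightarrow> b \<le> a \<Longrightarrow> num_syt3 a b c > 0"
  unfolding num_syt3_def by (intro divide_pos_pos mult_pos_pos) auto

definition syt3_denom :: "nat \<Rightarrow> nat \<Rightarrow> nat \<Rightarrow> real" where
  "syt3_denom a b c = fact (a + 2) * fact (b + 1) * fact c"

lemma num_syt3_mult_denom:
  "num_syt3 a b c * syt3_denom a b c =
     fact (a + b + c) * ((real a - real b + 1) * (real a - real c + 2) * (real b - real c + 1))"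
  by (simp add: num_syt3_def syt3_denom_def)

lemma num_syt3_pred_mult_denom:
  assumes "c \<le> b" "b \<le> a" "a + b + c = Suc s"
  shows "(if 0 < c then num_syt3 a b (c - 1) else 0) * syt3_denom a b c =
      fact s * (real c * ((real a - real b + 1) * (real a - real c + 3) * (real b - real c + 2)))"
    and "(if c < b then num_syt3 a (b - 1) c else 0) * syt3_denom a b c =
      fact s * ((real b + 1) * ((real a - real b + 2) * (real a - real c + 2) * (real b - real c)))"
    and "(if b < a then num_syt3 (a - 1) b c else 0) * syt3_denom a b c =
      fact s * ((real a + 2) * ((real a - real b) * (real a - real c + 1) * (real b - real c + 1)))"
proof -
  show "(if 0 < c then num_syt3 a b (c - 1) else 0) * syt3_denom a b c = fact s * (real c *
      ((real a - real b + 1) * (real a - real c + 3) * (real b - real c + 2)))"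
  proof (cases c)
    case (Suc c')
    have "(if 0 < c then num_syt3 a b (c - 1) else 0) * syt3_denom a b c =
        real c * (num_syt3 a b c' * syt3_denom a b c')"
      using Suc by (simp add: syt3_denom_def)
    then show ?thesis
      using num_syt3_mult_denom[of a b c'] assms(3) Suc by (simp add: algebra_simps)
  qed simp
  show "(if c < b then num_syt3 a (b - 1) c else 0) * syt3_denom a b c = fact s * ((real b + 1) *
      ((real a - real b + 2) * (real a - real c + 2) * (real b - real c)))"
  proof (cases "c < b")
    case True
    then obtain b' where b: "b = Suc b'" by (cases b) auto
    have "(if c < b then num_syt3 a (b - 1) c else 0) * syt3_denom a b c =
        (real b + 1) * (num_syt3 a b' c * syt3_denom a b' c)"
      using True b by (simp add: syt3_denom_def algebra_simps)
    then show ?thesis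
      using num_syt3_mult_denom[of a b' c] assms(3) b by (simp add: algebra_simps)
  qed (use assms in simp)
  show "(if b < a then num_syt3 (a - 1) b c else 0) * syt3_denom a b c = fact s * ((real a + 2) *
      ((real a - real b) * (real a - real c + 1) * (real b - real c + 1)))"
  proof (cases "b < a")
    case True
    then obtain a' where a: "a = Suc a'" by (cases a) auto
    have "(if b < a then num_syt3 (a - 1) b c else 0) * syt3_denom a b c =
        (real a + 2) * (num_syt3 a' b c * syt3_denom a' b c)"
      using True a by (simp add: syt3_denom_def algebra_simps)
    then show ?thesis
      using num_syt3_mult_denom[of a' b c] assms(3) a by (simp add: algebra_simps)
  qed (use assms in simp)
qed

lemma num_syt3_rec:
  assumes "c \<le> b" "b \<le> a" "0 < a + b + c"
  shows "num_syt3 a b c = (if 0 < c then num_syt3 a b (c - 1) else 0)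
    + (if c < b then num_syt3 a (b - 1) c else 0) + (if b < a then num_syt3 (a - 1) b c else 0)"
proof -
  obtain s where s: "a + b + c = Suc s" using assms(3) by (cases "a + b + c") auto
  have "real (a + b + c) = real s + 1" using s by simp
  then have "num_syt3 a b c * syt3_denom a b c = fact s * ((real a + real b + real c) *
      ((real a - real b + 1) * (real a - real c + 2) * (real b - real c + 1)))"
    using num_syt3_mult_denom[of a b c] s by simp
  also have "\<dots> = ((if 0 < c then num_syt3 a b (c - 1) else 0)
    + (if c < b then num_syt3 a (b - 1) c else 0) + (if b < a then num_syt3 (a - 1) b c else 0))
    * syt3_denom a b c"
    unfolding distrib_right num_syt3_pred_mult_denom[OF assms(1,2) s] by (simp add: algebra_simps)
  finally show ?thesis by (simp add: syt3_denom_def)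
qed

lemma num_syt3_ratio_200:
  assumes "n \<ge> 2"
  shows "num_syt3 n n (n - 2) = 2 * (real n - 1) / (3 * real n - 1) * num_syt3 n n n"
proof -
  obtain m where n: "n = Suc (Suc m)" using assms by (metis add_2_eq_Suc le_Suc_ex)
  have "(3 * real m + 5) * num_syt3 n n m = 2 * (real m + 1) * num_syt3 n n n"
    unfolding num_syt3_def n
    by (simp add: fact_Suc del: of_nat_Suc) (simp add: field_simps del: of_nat_Suc, simp add: algebra_simps)
  moreover have "3 * real m + 5 > 0" "(3 * real m + 5) * (3 * real m + 4) > 0" by simp_all
  ultimately show ?thesis using n by (simp add: field_simps)
qed

lemma num_syt3_ratio_210:
  assumes "n \<ge> 2"
  shows "num_syt3 n (n - 1) (n - 2) =
    8 * (real n - 1) * (real n + 1) / (3 * (3 * real n - 1) * (3 * real n - 2)) * num_syt3 n n n"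
proof -
  obtain m where n: "n = Suc (Suc m)" using assms by (metis add_2_eq_Suc le_Suc_ex)
  have "3 * (3 * real m + 5) * (3 * real m + 4) * num_syt3 n (Suc m) m =
      8 * (real m + 1) * (real m + 3) * num_syt3 n n n"
    unfolding num_syt3_def n
    by (simp add: fact_Suc del: of_nat_Suc) (simp add: field_simps del: of_nat_Suc, simp add: algebra_simps)
  moreover have "3 * real m + 5 > 0" "(3 * real m + 5) * (3 * real m + 4) > 0" by simp_all
  ultimately show ?thesis using n by (simp add: field_simps)
qed

lemma num_syt3_ratio_211:
  assumes "n \<ge> 2"
  shows "num_syt3 (n - 1) (n - 1) (n - 2) =
    (real n + 1) * (real n + 2) / (3 * (3 * real n - 1) * (3 * real n - 2)) * num_syt3 n n n"
proof -
  obtain m where n: "n = Suc (Suc m)" using assms by (metis add_2_eq_Suc le_Suc_ex)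
  have "3 * (3 * real m + 5) * (3 * real m + 4) * num_syt3 (Suc m) (Suc m) m =
      (real m + 3) * (real m + 4) * num_syt3 n n n"
    unfolding num_syt3_def n
    by (simp add: fact_Suc del: of_nat_Suc) (simp add: field_simps del: of_nat_Suc, simp add: algebra_simps)
  moreover have "3 * real m + 5 > 0" "(3 * real m + 5) * (3 * real m + 4) > 0" by simp_all
  ultimately show ?thesis using n by (simp add: field_simps)
qed

definition skew3 :: "nat \<Rightarrow> nat \<Rightarrow> nat \<Rightarrow> nat \<Rightarrow> (nat \<times> nat) set" where
  "skew3 n p q r = {(a, b). (a = 1 \<and> p < b \<or> a = 2 \<and> q < b \<or> a = 3 \<and> r < b) \<and> b \<le> n}"

lemma finite_skew3: "finite (skew3 n p q r)"
  by (rule finite_subset[of _ "{1..3} \<times> {0..n}"]) (auto simp: skew3_def)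

lemma cells3_eq_skew3: "cells3 n = skew3 n 0 0 0"
  by (auto simp: cells3_def skew3_def)

lemma min_cells_skew3:
  assumes "r \<le> q" "q \<le> p" "p \<le> n"
  shows "{c. min_cell (skew3 n p q r) c} =
    (if p < n then {(1, Suc p)} else {}) \<union> (if q < p then {(2, Suc q)} else {})
    \<union> (if r < q then {(3, Suc r)} else {})"
proof (intro set_eqI)
  fix c :: "nat \<times> nat"
  obtain a b where c: "c = (a, b)" by fastforce
  show "c \<in> {c. min_cell (skew3 n p q r) c} \<longleftrightarrow> c \<in> (if p < n then {(1, Suc p)} else {})
    \<union> (if q < p then {(2, Suc q)} else {}) \<union> (if r < q then {(3, Suc r)} else {})"
    unfolding c mem_Collect_eq min_cell_iff
    using assms by (cases b) (auto simp: skew3_def numeral_2_eq_2 numeral_3_eq_3)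
qed

lemma skew3_remove_cell:
  "skew3 n p q r - {(1, Suc p)} = skew3 n (Suc p) q r"
  "skew3 n p q r - {(2, Suc q)} = skew3 n p (Suc q) r"
  "skew3 n p q r - {(3, Suc r)} = skew3 n p q (Suc r)"
  by (auto simp: skew3_def)

lemma card_syt_on_skew3_rec:
  assumes "r \<le> q" "q \<le> p" "p \<le> n" "r < n"
  shows "card (syt_on (skew3 n p q r)) =
    (if p < n then card (syt_on (skew3 n (Suc p) q r)) else 0)
    + (if q < p then card (syt_on (skew3 n p (Suc q) r)) else 0)
    + (if r < q then card (syt_on (skew3 n p q (Suc r))) else 0)"
proof -
  let ?D = "skew3 n p q r"
  let ?N = "\<lambda>c. card (syt_on (?D - {c}))"
  have "(3, n) \<in> ?D" using assms(4) by (simp add: skew3_def)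
  then have "card (syt_on ?D) = (\<Sum>c | min_cell ?D c. ?N c)"
    using sum_syt_on_by_min_cell[OF finite_skew3, of n p q r "\<lambda>_. 1::nat"] by auto
  also have "\<dots> = (if p < n then ?N (1, Suc p) else 0) + (if q < p then ?N (2, Suc q) else 0)
      + (if r < q then ?N (3, Suc r) else 0)"
    unfolding min_cells_skew3[OF assms(1-3)]
    by (cases "p < n"; cases "q < p"; cases "r < q") simp_all
  finally show ?thesis by (simp only: skew3_remove_cell)
qed

text \<open>Rotating \<open>skew3 n p q r\<close> by 180 degrees gives the straight shape with rows
  \<open>n - r \<ge> n - q \<ge> n - p\<close>.\<close>
lemma card_syt_on_skew3:
  assumes "r \<le> q" "q \<le> p" "p \<le> n"
  shows "real (card (syt_on (skew3 n p q r))) = num_syt3 (n - r) (n - q) (n - p)"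
  using assms
proof (induction "(n - p) + (n - q) + (n - r)" arbitrary: p q r rule: less_induct)
  case less
  show ?case
  proof (cases "r < n")
    case False
    then have "p = n" "q = n" "r = n" using less.prems by auto
    moreover have "skew3 n n n n = {}" by (auto simp: skew3_def)
    ultimately show ?thesis by (simp add: syt_on_empty num_syt3_def)
  next
    case True
    have "real (card (syt_on (skew3 n p q r))) =
      (if p < n then real (card (syt_on (skew3 n (Suc p) q r))) else 0)
      + (if q < p then real (card (syt_on (skew3 n p (Suc q) r))) else 0)
      + (if r < q then real (card (syt_on (skew3 n p q (Suc r)))) else 0)"
      using card_syt_on_skew3_rec[OF less.prems True] by simp
    also have "\<dots> = (if p < n then num_syt3 (n - r) (n - q) (n - Suc p) else 0)
      + (if q < p then num_syt3 (n - r) (n - Suc q) (n - p) else 0)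
      + (if r < q then num_syt3 (n - Suc r) (n - q) (n - p) else 0)"
    proof -
      have IH: "real (card (syt_on (skew3 n p' q' r'))) = num_syt3 (n - r') (n - q') (n - p')"
        if "r' \<le> q'" "q' \<le> p'" "p' \<le> n" "(n - p') + (n - q') + (n - r') < (n - p) + (n - q) + (n - r)"
        for p' q' r'
        using less.hyps[OF that(4) that(1-3)] .
      have "p < n \<Longrightarrow> real (card (syt_on (skew3 n (Suc p) q r))) = num_syt3 (n - r) (n - q) (n - Suc p)"
           "q < p \<Longrightarrow> real (card (syt_on (skew3 n p (Suc q) r))) = num_syt3 (n - r) (n - Suc q) (n - p)"
           "r < q \<Longrightarrow> real (card (syt_on (skew3 n p q (Suc r)))) = num_syt3 (n - Suc r) (n - q) (n - p)"
        by (rule IH; use less.prems in linarith)+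
      then show ?thesis by simp
    qed
    also have "\<dots> = num_syt3 (n - r) (n - q) (n - p)"
    proof -
      have "(0 < n - p) = (p < n)" "(n - p < n - q) = (q < p)" "(n - q < n - r) = (r < q)"
        "n - p - 1 = n - Suc p" "n - q - 1 = n - Suc q" "n - r - 1 = n - Suc r"
        using less.prems by auto
      moreover have "n - p \<le> n - q" "n - q \<le> n - r" "0 < (n - r) + (n - q) + (n - p)"
        using less.prems True by auto
      ultimately show ?thesis by (simp only: num_syt3_rec)
    qed
    finally show ?thesis .
  qed
qed

lemma SYT3_eq_syt_on: "SYT3 n = syt_on (cells3 n)"
proof -
  have "card (cells3 n) = 3 * n" by (simp add: cells3_def card_cartesian_product)
  then show ?thesis
    unfolding SYT3_def syt_on_def succ_cell_def by (auto 0 0 simp: Ball_def)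
qed

lemma sum_entry_1_2_SYT3:
  fixes f :: "nat \<Rightarrow> 'a::comm_semiring_1"
  assumes "n \<ge> 2"
  shows "(\<Sum>T\<in>SYT3 n. f (T (1, 2))) =
      of_nat (card (syt_on (skew3 n 2 0 0))) * f 2 + of_nat (card (syt_on (skew3 n 2 1 0))) * f 3
      + of_nat (card (syt_on (skew3 n 2 1 1))) * f 4"
proof -
  have entry: "(\<Sum>T\<in>syt_on (skew3 n p q r). g (T (1, 2))) = (\<Sum>c | min_cell (skew3 n p q r) c.
      if c = (1, 2) then of_nat (card (syt_on (skew3 n p q r - {c}))) * g 1
      else \<Sum>T\<in>syt_on (skew3 n p q r - {c}). g (Suc (T (1, 2))))"
    if "p \<le> 1" for p q r and g :: "nat \<Rightarrow> 'a"
    using that assms by (intro sum_syt_on_entry finite_skew3) (simp add: skew3_def)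
  \<comment> \<open>\<open>1 = Suc 0\<close> is a simp rule, so all numerals are unfolded into \<open>Suc\<close> form below; otherwise
    the instances of \<open>skew3_remove_cell\<close> no longer match the simplified goals.\<close>
  have D3: "(\<Sum>T\<in>syt_on (skew3 n 1 1 1). g (T (1, 2))) =
      of_nat (card (syt_on (skew3 n 2 1 1))) * g 1"
    for g :: "nat \<Rightarrow> 'a"
    using entry[where p=1 and q=1 and r=1 and g=g] min_cells_skew3[of 1 1 1 n]
      skew3_remove_cell[of n 1 1 1] assms
    by (simp add: eval_nat_numeral add_ac)
  have D2: "(\<Sum>T\<in>syt_on (skew3 n 1 1 0). g (T (1, 2))) =
      of_nat (card (syt_on (skew3 n 2 1 0))) * g 1 + of_nat (card (syt_on (skew3 n 2 1 1))) * g 2"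
    for g :: "nat \<Rightarrow> 'a"
    using entry[where p=1 and q=1 and r=0 and g=g] D3[of "g \<circ> Suc"] min_cells_skew3[of 0 1 1 n]
      skew3_remove_cell[of n 1 1 0] assms
    by (simp add: eval_nat_numeral add_ac)
  have D1: "(\<Sum>T\<in>syt_on (skew3 n 1 0 0). g (T (1, 2))) = of_nat (card (syt_on (skew3 n 2 0 0))) * g 1
      + of_nat (card (syt_on (skew3 n 2 1 0))) * g 2 + of_nat (card (syt_on (skew3 n 2 1 1))) * g 3"
    for g :: "nat \<Rightarrow> 'a"
    using entry[where p=1 and q=0 and r=0 and g=g] D2[of "g \<circ> Suc"] min_cells_skew3[of 0 0 1 n]
      skew3_remove_cell[of n 1 0 0] assms
    by (simp add: eval_nat_numeral add_ac)
  show ?thesis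
    using entry[where p=0 and q=0 and r=0 and g=f] D1[of "f \<circ> Suc"] min_cells_skew3[of 0 0 0 n]
      skew3_remove_cell[of n 0 0 0] assms
    by (simp add: SYT3_eq_syt_on cells3_eq_skew3 eval_nat_numeral add_ac)
qed

lemma finite_SYT3: "finite (SYT3 n)"
  by (simp add: SYT3_eq_syt_on finite_syt_on cells3_def)

lemma card_SYT3: "real (card (SYT3 n)) = num_syt3 n n n"
  using card_syt_on_skew3[of 0 0 0 n] by (simp add: SYT3_eq_syt_on cells3_eq_skew3)

lemma entry_1_2_SYT3:
  assumes "n \<ge> 2" "T \<in> SYT3 n"
  shows "T (1, 2) \<in> {2, 3, 4}"
proof -
  let ?f = "\<lambda>v. if v \<in> {2, 3, 4} then 0 else 1 :: nat"
  have "(\<Sum>T\<in>SYT3 n. ?f (T (1, 2))) = 0"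
    using sum_entry_1_2_SYT3[OF assms(1), of ?f] by simp
  then show ?thesis
    using assms(2) finite_SYT3 by (simp split: if_splits)
qed

lemma expectation_entry_1_2_SYT3:
  fixes x :: real
  assumes "n \<ge> 2"
  shows "measure_pmf.expectation (pmf_of_set (SYT3 n)) (\<lambda>T. x ^ T (1, 2))
    = (num_syt3 n n (n - 2) * x ^ 2 + num_syt3 n (n - 1) (n - 2) * x ^ 3
       + num_syt3 (n - 1) (n - 1) (n - 2) * x ^ 4) / num_syt3 n n n"
proof -
  have "SYT3 n \<noteq> {}"
    using card_SYT3[of n] num_syt3_pos[of n n n] by auto
  then have "measure_pmf.expectation (pmf_of_set (SYT3 n)) (\<lambda>T. x ^ T (1, 2))
      = (\<Sum>T\<in>SYT3 n. x ^ T (1, 2)) / real (card (SYT3 n))"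
    by (rule integral_pmf_of_set[OF _ finite_SYT3])
  also have "(\<Sum>T\<in>SYT3 n. x ^ T (1, 2)) = num_syt3 n n (n - 2) * x ^ 2
      + num_syt3 n (n - 1) (n - 2) * x ^ 3 + num_syt3 (n - 1) (n - 1) (n - 2) * x ^ 4"
    using sum_entry_1_2_SYT3[OF assms, of "\<lambda>v. x ^ v"] card_syt_on_skew3[of 0 0 2 n]
      card_syt_on_skew3[of 0 1 2 n] card_syt_on_skew3[of 1 1 2 n] assms
    by simp
  also note card_SYT3
  finally show ?thesis .
qed

theorem mainTheorem8:
  fixes n :: nat and x :: real
  assumes "n \<ge> 2"
  shows "(\<forall>T \<in> SYT3 n. T (1, 2) \<in> {2, 3, 4})
    \<and> measure_pmf.expectation (pmf_of_set (SYT3 n)) (\<lambda>T. x ^ T (1, 2))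
      = 2 * (real n - 1) / (3 * real n - 1) * x ^ 2
        + 8 * (real n - 1) * (real n + 1) / (3 * (3 * real n - 1) * (3 * real n - 2)) * x ^ 3
        + (real n + 1) * (real n + 2) / (3 * (3 * real n - 1) * (3 * real n - 2)) * x ^ 4"
proof
  show "\<forall>T \<in> SYT3 n. T (1, 2) \<in> {2, 3, 4}"
    using entry_1_2_SYT3[OF assms] by blast
next
  have cancel: "(a * N * x ^ 2 + b * N * x ^ 3 + c * N * x ^ 4) / N = a * x ^ 2 + b * x ^ 3 + c * x ^ 4"
    if "N \<noteq> 0" for a b c N :: real
    using that by (simp add: field_simps)
  have "num_syt3 n n n \<noteq> 0" using num_syt3_pos[of n n n] by simp
  then show "measure_pmf.expectation (pmf_of_set (SYT3 n)) (\<lambda>T. x ^ T (1, 2))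
      = 2 * (real n - 1) / (3 * real n - 1) * x ^ 2
        + 8 * (real n - 1) * (real n + 1) / (3 * (3 * real n - 1) * (3 * real n - 2)) * x ^ 3
        + (real n + 1) * (real n + 2) / (3 * (3 * real n - 1) * (3 * real n - 2)) * x ^ 4"
    unfolding expectation_entry_1_2_SYT3[OF assms] num_syt3_ratio_200[OF assms]
      num_syt3_ratio_210[OF assms] num_syt3_ratio_211[OF assms]
    by (rule cancel)
qed

end
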